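(* Let $S$ be a finite set with labelling $\ell:S\to L$. For all transition functions $\sigma,\tau:S\to\mathcal{D}(S)$ and every $S^2_\Delta$-closed policy $P\in\mathcal{P}_\sigma$, there exists an $S^2_\Delta$-closed policy $Q\in\mathcal{P}_\tau$ such that $d_F(P,Q)\le 2\,d_F(\sigma,\tau)$.
   Context: $\mathcal{D}(Y)$ = probability distributions on $Y$; $\Omega(\mu,\nu)$ = couplings of $\mu,\nu$ (distributions on $S\times S$ with marginals $\mu,\nu$). $S^2_\Delta=\{(s,s)\mid s\in S\}$, $S^2_1=\{(s,t)\mid\ell(s)\ne\ell(t)\}$. For a transition function $\tau$, $\mathcal{P}_\tau$ is the set of maps $P:S\times S\to\mathcal{D}(S\times S)$ with $P(s,t)\in\Omega(\tau(s),\tau(t))$ for $(s,t)\notin S^2_1$ and $P(s,t)$ the point mass at $(s,t)$ for $(s,t)\in S^2_1$. $P$ is $S^2_\Delta$-closed if $\mathrm{support}(P(s,s))\subseteq S^2_\Delta$ for all $s$. For distributions $\alpha,\beta$ on a finite set $Y$, $d_{TV}(\alpha,\beta)=\max_{y}|\alpha(y)-\beta(y)|$; for functions $f,g$ with values in distributions, $d_F(f,g)=\max_x d_{TV}(f(x),g(x))$ (so $d_F(\sigma,\tau)=\max_{s}d_{TV}(\sigma(s),\tau(s))$ and $d_F(P,Q)=\max_{(s,t)}d_{TV}(P(s,t),Q(s,t))$). *)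

theory Defs
  imports "HOL-Probability.Probability"
begin

text \<open>The finite state set S is the universe of a finite type 's; the labelling is l :: 's => 'l.
  Distributions are pmfs.\<close>

definition couplings :: "'s pmf \<Rightarrow> 's pmf \<Rightarrow> ('s \<times> 's) pmf set" where
  "couplings \<mu> \<nu> = {p. map_pmf fst p = \<mu> \<and> map_pmf snd p = \<nu>}"

definition diag_pairs :: "('s \<times> 's) set" where
  "diag_pairs = {(s, s) | s. True}"

definition label_diff_pairs :: "('s \<Rightarrow> 'l) \<Rightarrow> ('s \<times> 's) set" where
  "label_diff_pairs l = {(s, t). l s \<noteq> l t}"

definition policies :: "('s \<Rightarrow> 'l) \<Rightarrow> ('s \<Rightarrow> 's pmf) \<Rightarrow> ('s \<times> 's \<Rightarrow> ('s \<times> 's) pmf) set" where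
  "policies l \<tau> = {P. \<forall>s t.
      ((s, t) \<notin> label_diff_pairs l \<longrightarrow> P (s, t) \<in> couplings (\<tau> s) (\<tau> t)) \<and>
      ((s, t) \<in> label_diff_pairs l \<longrightarrow> P (s, t) = return_pmf (s, t))}"

definition diag_closed :: "('s \<times> 's \<Rightarrow> ('s \<times> 's) pmf) \<Rightarrow> bool" where
  "diag_closed P \<longleftrightarrow> (\<forall>s. set_pmf (P (s, s)) \<subseteq> diag_pairs)"

definition d_TV :: "'a::finite pmf \<Rightarrow> 'a pmf \<Rightarrow> real" where
  "d_TV \<alpha> \<beta> = Max (range (\<lambda>y. \<bar>pmf \<alpha> y - pmf \<beta> y\<bar>))"

definition d_F :: "('x::finite \<Rightarrow> 'a::finite pmf) \<Rightarrow> ('x \<Rightarrow> 'a pmf) \<Rightarrow> real" where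
  "d_F f g = Max (range (\<lambda>x. d_TV (f x) (g x)))"

end

theory Submission
  imports Defs
begin

text \<open>
  A coupling of \<open>\<mu>\<^sub>1, \<mu>\<^sub>2\<close> is turned into a coupling of \<open>\<nu>\<^sub>1, \<nu>\<^sub>2\<close> by moving one coordinate
  at a time with the Markov kernel that leaves the common mass \<open>min (\<mu> x) (\<nu> x)\<close> in place
  and spreads the surplus of \<open>\<mu>\<close> over the surplus of \<open>\<nu>\<close> proportionally. This kernel pushes
  \<open>\<mu>\<close> to \<open>\<nu>\<close>, and moving one coordinate changes the mass of each point \<open>(x, y)\<close> by at most
  \<open>|\<mu> x - \<nu> x|\<close>; two moves cost at most \<open>2 d\<^sub>F(\<sigma>, \<tau>)\<close>. On the diagonal, a coupling
  supported on the diagonal is the diagonal coupling of its marginal, so replacing \<open>\<sigma> s\<close>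
  by \<open>\<tau> s\<close> there costs only \<open>d\<^sub>F(\<sigma>, \<tau>)\<close> and keeps the policy diagonal-closed.
\<close>

lemma pmf_embed_pmf_finite:
  fixes f :: "'a::finite \<Rightarrow> real"
  assumes "\<And>x. 0 \<le> f x" and "(\<Sum>x\<in>UNIV. f x) = 1"
  shows "pmf (embed_pmf f) x = f x"
proof -
  have "(\<integral>\<^sup>+x. f x \<partial>count_space UNIV) = ennreal (\<Sum>x\<in>UNIV. f x)"
    using assms(1) by (simp add: nn_integral_count_space_finite sum_ennreal)
  then show ?thesis
    using assms by (simp add: pmf_embed_pmf)
qed

lemma pmf_map_pair_left:
  "pmf (map_pmf (\<lambda>x. (x, b)) M) (x, y) = (if b = y then pmf M x else 0)"
  by (auto simp: pmf_map vimage_def measure_pmf_single)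

lemma pmf_map_diag:
  "pmf (map_pmf (\<lambda>x. (x, x)) M) (x, y) = (if x = y then pmf M x else 0)"
  by (cases "x = y") (auto simp: pmf_map vimage_def measure_pmf_single Collect_conj_eq)

lemma pmf_le_pmf_fst:
  fixes R :: "('a \<times> 'b) pmf"
  shows "pmf R (x, y) \<le> pmf (map_pmf fst R) x"
proof -
  have "pmf R (x, y) = measure R {(x, y)}"
    by (simp add: measure_pmf_single)
  also have "\<dots> \<le> measure R (fst -` {x})"
    by (rule measure_pmf.finite_measure_mono) auto
  finally show ?thesis
    by (simp add: pmf_map)
qed

definition surplus :: "'a::finite pmf \<Rightarrow> 'a pmf \<Rightarrow> real" where
  "surplus \<mu> \<nu> = (\<Sum>x\<in>UNIV. max 0 (pmf \<nu> x - pmf \<mu> x))"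

lemma surplus_swap: "surplus \<nu> \<mu> = surplus \<mu> \<nu>"
proof -
  have "surplus \<nu> \<mu> - surplus \<mu> \<nu> = (\<Sum>x\<in>UNIV. pmf \<mu> x - pmf \<nu> x)"
    unfolding surplus_def sum_subtractf[symmetric] by (rule sum.cong) auto
  also have "\<dots> = 0"
    by (simp add: sum_subtractf sum_pmf_eq_1)
  finally show ?thesis by simp
qed

lemma surplus_nonneg: "0 \<le> surplus \<mu> \<nu>"
  unfolding surplus_def by (rule sum_nonneg) simp

lemma surplus_eq_0_iff: "surplus \<mu> \<nu> = 0 \<longleftrightarrow> \<mu> = \<nu>"
proof
  assume "surplus \<mu> \<nu> = 0"
  then have "max 0 (pmf \<nu> x - pmf \<mu> x) = 0" for x
    unfolding surplus_def by (subst (asm) sum_nonneg_eq_0_iff) auto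
  then have le: "pmf \<nu> x \<le> pmf \<mu> x" for x
    by (metis max.absorb_iff1 diff_le_0_iff_le)
  have "(\<Sum>x\<in>UNIV. pmf \<mu> x - pmf \<nu> x) = 0"
    by (simp add: sum_subtractf sum_pmf_eq_1)
  then have "pmf \<mu> x - pmf \<nu> x = 0" for x
    using le by (subst (asm) sum_nonneg_eq_0_iff) auto
  then show "\<mu> = \<nu>"
    by (intro pmf_eqI) simp
qed (simp add: surplus_def)

lemma surplus_mult_divide:
  "surplus \<mu> \<nu> * (max 0 (pmf \<nu> x - pmf \<mu> x) / surplus \<mu> \<nu>) = max 0 (pmf \<nu> x - pmf \<mu> x)"
  by (cases "surplus \<mu> \<nu> = 0") (simp_all add: surplus_eq_0_iff)

text \<open>The division by \<open>pmf \<mu> a\<close> makes the kernel junk at points outside the support of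
  \<open>\<mu>\<close>; only the product \<open>pmf \<mu> a * pmf (transport_kernel \<mu> \<nu> a) x\<close> is ever used.\<close>

definition transport_kernel :: "'a::finite pmf \<Rightarrow> 'a pmf \<Rightarrow> 'a \<Rightarrow> 'a pmf" where
  "transport_kernel \<mu> \<nu> a = embed_pmf (\<lambda>x.
     ((if x = a then min (pmf \<mu> a) (pmf \<nu> a) else 0)
      + max 0 (pmf \<mu> a - pmf \<nu> a) * (max 0 (pmf \<nu> x - pmf \<mu> x) / surplus \<mu> \<nu>)) / pmf \<mu> a)"

lemma pmf_transport_kernel:
  "pmf \<mu> a * pmf (transport_kernel \<mu> \<nu> a) x =
     (if x = a then min (pmf \<mu> a) (pmf \<nu> a) else 0)
     + max 0 (pmf \<mu> a - pmf \<nu> a) * (max 0 (pmf \<nu> x - pmf \<mu> x) / surplus \<mu> \<nu>)"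
proof (cases "pmf \<mu> a = 0")
  case True
  then show ?thesis by auto
next
  case False
  let ?w = "\<lambda>x. (if x = a then min (pmf \<mu> a) (pmf \<nu> a) else 0)
      + max 0 (pmf \<mu> a - pmf \<nu> a) * (max 0 (pmf \<nu> x - pmf \<mu> x) / surplus \<mu> \<nu>)"
  have "(\<Sum>x\<in>UNIV. ?w x) = min (pmf \<mu> a) (pmf \<nu> a) + max 0 (pmf \<mu> a - pmf \<nu> a)"
    by (simp add: sum.distrib flip: sum_distrib_left sum_divide_distrib surplus_def)
       (auto simp: surplus_eq_0_iff)
  also have "\<dots> = pmf \<mu> a" by simp
  finally have "(\<Sum>x\<in>UNIV. ?w x / pmf \<mu> a) = 1"
    using False by (simp flip: sum_divide_distrib)
  moreover have "0 \<le> ?w x / pmf \<mu> a" for x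
    by (intro divide_nonneg_nonneg add_nonneg_nonneg mult_nonneg_nonneg) (auto simp: surplus_nonneg)
  ultimately show ?thesis
    using False by (simp add: transport_kernel_def pmf_embed_pmf_finite)
qed

lemma pmf_bind_finite:
  fixes M :: "'a::finite pmf"
  shows "pmf (bind_pmf M f) x = (\<Sum>a\<in>UNIV. pmf M a * pmf (f a) x)"
  by (simp add: pmf_bind integral_measure_pmf_real[where A = UNIV] mult.commute)

lemma bind_transport_kernel: "bind_pmf \<mu> (transport_kernel \<mu> \<nu>) = \<nu>"
proof (rule pmf_eqI)
  fix x
  let ?c = "max 0 (pmf \<nu> x - pmf \<mu> x) / surplus \<mu> \<nu>"
  have "(\<Sum>a\<in>UNIV. max 0 (pmf \<mu> a - pmf \<nu> a) * ?c) = surplus \<nu> \<mu> * ?c"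
    unfolding surplus_def[of \<nu> \<mu>] by (rule sum_distrib_right[symmetric])
  then have "pmf (bind_pmf \<mu> (transport_kernel \<mu> \<nu>)) x
      = min (pmf \<mu> x) (pmf \<nu> x) + surplus \<mu> \<nu> * ?c"
    by (simp add: pmf_bind_finite pmf_transport_kernel sum.distrib surplus_swap)
  also have "\<dots> = pmf \<nu> x"
    unfolding surplus_mult_divide by simp
  finally show "pmf (bind_pmf \<mu> (transport_kernel \<mu> \<nu>)) x = pmf \<nu> x" .
qed

definition transport_fst :: "('a \<Rightarrow> 'a pmf) \<Rightarrow> ('a \<times> 'b) pmf \<Rightarrow> ('a \<times> 'b) pmf" where
  "transport_fst K R = bind_pmf R (\<lambda>(a, b). map_pmf (\<lambda>x. (x, b)) (K a))"

lemma map_fst_transport_fst: "map_pmf fst (transport_fst K R) = bind_pmf (map_pmf fst R) K"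
  by (simp add: transport_fst_def map_bind_pmf bind_map_pmf pmf.map_comp o_def case_prod_beta)

lemma map_snd_transport_fst: "map_pmf snd (transport_fst K R) = map_pmf snd R"
  by (simp add: transport_fst_def map_bind_pmf pmf.map_comp o_def case_prod_beta)
     (simp add: map_pmf_def)

lemma pmf_transport_fst:
  fixes R :: "('a::finite \<times> 'b::finite) pmf"
  shows "pmf (transport_fst K R) (x, y) = (\<Sum>a\<in>UNIV. pmf R (a, y) * pmf (K a) x)"
proof -
  have "pmf (transport_fst K R) (x, y)
      = (\<Sum>a\<in>UNIV. \<Sum>b\<in>UNIV. pmf R (a, b) * (if b = y then pmf (K a) x else 0))"
    by (simp add: transport_fst_def pmf_bind_finite pmf_map_pair_left split_beta
        sum.cartesian_product flip: UNIV_Times_UNIV)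
  then show ?thesis
    by (simp add: if_distrib cong: if_cong)
qed

lemma transport_fst_close:
  fixes R :: "('a::finite \<times> 'b::finite) pmf"
  assumes "map_pmf fst R = \<mu>"
  shows "\<bar>pmf (transport_fst (transport_kernel \<mu> \<nu>) R) (x, y) - pmf R (x, y)\<bar>
           \<le> \<bar>pmf \<mu> x - pmf \<nu> x\<bar>"
proof -
  define c where "c a = pmf R (a, y) / pmf \<mu> a" for a
  have R_le: "pmf R (a, y) \<le> pmf \<mu> a" for a
    using pmf_le_pmf_fst[of R a y] assms by simp
  have R_eq: "pmf R (a, y) = c a * pmf \<mu> a" for a
    using R_le[of a] pmf_nonneg[of R "(a, y)"] by (cases "pmf \<mu> a = 0") (auto simp: c_def)
  have c_nonneg: "0 \<le> c a" and c_le_1: "c a \<le> 1" for a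
    using R_le[of a] by (auto simp: c_def divide_le_eq_1)
  let ?d = "max 0 (pmf \<nu> x - pmf \<mu> x) / surplus \<mu> \<nu>"
  let ?S = "(\<Sum>a\<in>UNIV. c a * max 0 (pmf \<mu> a - pmf \<nu> a)) * ?d"
  have transported: "pmf (transport_fst (transport_kernel \<mu> \<nu>) R) (x, y)
      = c x * min (pmf \<mu> x) (pmf \<nu> x) + ?S"
  proof -
    have "(\<Sum>a\<in>UNIV. c a * (if x = a then min (pmf \<mu> a) (pmf \<nu> a) else 0))
        = c x * min (pmf \<mu> x) (pmf \<nu> x)"
      by (simp add: if_distrib[of "\<lambda>t. c _ * t"] cong: if_cong)
    then show ?thesis
      by (simp add: pmf_transport_fst R_eq mult.assoc pmf_transport_kernel distrib_left
          sum.distrib sum_distrib_right sum_divide_distrib)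
  qed
  have "?S \<le> surplus \<nu> \<mu> * ?d"
    unfolding surplus_def[of \<nu> \<mu>]
    by (intro mult_right_mono sum_mono)
       (auto simp: surplus_nonneg intro: mult_left_le_one_le c_nonneg c_le_1)
  then have S_le: "?S \<le> max 0 (pmf \<nu> x - pmf \<mu> x)"
    by (simp only: surplus_swap[of \<nu> \<mu>] surplus_mult_divide)
  have S_nonneg: "0 \<le> ?S"
    by (intro mult_nonneg_nonneg sum_nonneg) (auto simp: surplus_nonneg c_nonneg)
  have "c x * min (pmf \<mu> x) (pmf \<nu> x) = pmf R (x, y) - c x * max 0 (pmf \<mu> x - pmf \<nu> x)"
    by (simp add: R_eq min_def max_def algebra_simps)
  moreover have "c x * max 0 (pmf \<mu> x - pmf \<nu> x) \<le> max 0 (pmf \<mu> x - pmf \<nu> x)"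
    by (intro mult_left_le_one_le c_nonneg c_le_1) simp
  moreover have "0 \<le> c x * max 0 (pmf \<mu> x - pmf \<nu> x)"
    by (simp add: c_nonneg)
  ultimately show ?thesis
    unfolding transported using S_le S_nonneg by (auto simp: abs_le_iff max_def)
qed

definition transport_snd :: "('b \<Rightarrow> 'b pmf) \<Rightarrow> ('a \<times> 'b) pmf \<Rightarrow> ('a \<times> 'b) pmf" where
  "transport_snd K R = map_pmf prod.swap (transport_fst K (map_pmf prod.swap R))"

lemma pmf_map_swap: "pmf (map_pmf prod.swap R) (x, y) = pmf R (y, x)"
  using pmf_map_inj'[of prod.swap R "(y, x)"] by simp

lemma map_fst_transport_snd: "map_pmf fst (transport_snd K R) = map_pmf fst R"
  using map_snd_transport_fst[of K "map_pmf prod.swap R"]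
  by (simp add: transport_snd_def pmf.map_comp o_def)

lemma map_snd_transport_snd: "map_pmf snd (transport_snd K R) = bind_pmf (map_pmf snd R) K"
  using map_fst_transport_fst[of K "map_pmf prod.swap R"]
  by (simp add: transport_snd_def pmf.map_comp o_def)

lemma transport_snd_close:
  fixes R :: "('a::finite \<times> 'b::finite) pmf"
  assumes "map_pmf snd R = \<mu>"
  shows "\<bar>pmf (transport_snd (transport_kernel \<mu> \<nu>) R) (x, y) - pmf R (x, y)\<bar>
           \<le> \<bar>pmf \<mu> y - pmf \<nu> y\<bar>"
proof -
  have "map_pmf fst (map_pmf prod.swap R) = \<mu>"
    using assms by (simp add: pmf.map_comp o_def)
  from transport_fst_close[OF this, of \<nu> y x] show ?thesis
    by (simp add: transport_snd_def pmf_map_swap)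
qed

definition transport_coupling ::
  "'a::finite pmf \<Rightarrow> 'a pmf \<Rightarrow> 'b::finite pmf \<Rightarrow> 'b pmf \<Rightarrow> ('a \<times> 'b) pmf \<Rightarrow> ('a \<times> 'b) pmf" where
  "transport_coupling \<mu>1 \<nu>1 \<mu>2 \<nu>2 R =
     transport_snd (transport_kernel \<mu>2 \<nu>2) (transport_fst (transport_kernel \<mu>1 \<nu>1) R)"

lemma transport_coupling_marginals:
  assumes "map_pmf fst R = \<mu>1" and "map_pmf snd R = \<mu>2"
  shows "map_pmf fst (transport_coupling \<mu>1 \<nu>1 \<mu>2 \<nu>2 R) = \<nu>1"
    and "map_pmf snd (transport_coupling \<mu>1 \<nu>1 \<mu>2 \<nu>2 R) = \<nu>2"
  using assms
  by (simp_all add: transport_coupling_def map_fst_transport_snd map_snd_transport_snd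
      map_fst_transport_fst map_snd_transport_fst bind_transport_kernel)

lemma transport_coupling_close:
  assumes "map_pmf fst R = \<mu>1" and "map_pmf snd R = \<mu>2"
  shows "\<bar>pmf (transport_coupling \<mu>1 \<nu>1 \<mu>2 \<nu>2 R) (x, y) - pmf R (x, y)\<bar>
           \<le> \<bar>pmf \<mu>1 x - pmf \<nu>1 x\<bar> + \<bar>pmf \<mu>2 y - pmf \<nu>2 y\<bar>"
proof -
  let ?R' = "transport_fst (transport_kernel \<mu>1 \<nu>1) R"
  have "map_pmf snd ?R' = \<mu>2"
    using assms(2) by (simp add: map_snd_transport_fst)
  then have "\<bar>pmf (transport_coupling \<mu>1 \<nu>1 \<mu>2 \<nu>2 R) (x, y) - pmf ?R' (x, y)\<bar>
      \<le> \<bar>pmf \<mu>2 y - pmf \<nu>2 y\<bar>"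
    unfolding transport_coupling_def by (rule transport_snd_close)
  moreover have "\<bar>pmf ?R' (x, y) - pmf R (x, y)\<bar> \<le> \<bar>pmf \<mu>1 x - pmf \<nu>1 x\<bar>"
    using assms(1) by (rule transport_fst_close)
  ultimately show ?thesis
    by linarith
qed

lemma d_F_le:
  assumes "\<And>x y. \<bar>pmf (f x) y - pmf (g x) y\<bar> \<le> c"
  shows "d_F f g \<le> c"
  using assms unfolding d_F_def d_TV_def by (simp add: Max_le_iff)

lemma pmf_diff_le_d_F: "\<bar>pmf (f x) y - pmf (g x) y\<bar> \<le> d_F f g"
proof -
  have "\<bar>pmf (f x) y - pmf (g x) y\<bar> \<le> d_TV (f x) (g x)"
    unfolding d_TV_def by (rule Max_ge) auto
  also have "\<dots> \<le> d_F f g"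
    unfolding d_F_def by (rule Max_ge) auto
  finally show ?thesis .
qed

lemma diag_supported_eq_map_diag:
  assumes "set_pmf R \<subseteq> diag_pairs"
  shows "R = map_pmf (\<lambda>x. (x, x)) (map_pmf fst R)"
proof -
  have "R = map_pmf (\<lambda>p. (fst p, fst p)) R"
    using assms by (subst map_pmf_idI[symmetric]) (auto intro!: map_pmf_cong simp: diag_pairs_def)
  then show ?thesis
    by (simp add: pmf.map_comp o_def)
qed

definition transport_policy ::
  "('s::finite \<Rightarrow> 'l) \<Rightarrow> ('s \<Rightarrow> 's pmf) \<Rightarrow> ('s \<Rightarrow> 's pmf) \<Rightarrow> ('s \<times> 's \<Rightarrow> ('s \<times> 's) pmf)
     \<Rightarrow> 's \<times> 's \<Rightarrow> ('s \<times> 's) pmf" where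
  "transport_policy l \<sigma> \<tau> P = (\<lambda>(s, t).
     if l s \<noteq> l t then return_pmf (s, t)
     else if s = t then map_pmf (\<lambda>x. (x, x)) (\<tau> s)
     else transport_coupling (\<sigma> s) (\<tau> s) (\<sigma> t) (\<tau> t) (P (s, t)))"

lemma transport_policy_in_policies:
  assumes "P \<in> policies l \<sigma>"
  shows "transport_policy l \<sigma> \<tau> P \<in> policies l \<tau>"
  using assms
  by (auto simp: policies_def label_diff_pairs_def couplings_def transport_policy_def
      pmf.map_comp o_def transport_coupling_marginals)

lemma diag_closed_transport_policy: "diag_closed (transport_policy l \<sigma> \<tau> P)"
  by (auto simp: diag_closed_def diag_pairs_def transport_policy_def)

lemma transport_policy_close:
  assumes "P \<in> policies l \<sigma>" and "diag_closed P"
  shows "\<bar>pmf (P (s, t)) (x, y) - pmf (transport_policy l \<sigma> \<tau> P (s, t)) (x, y)\<bar>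
           \<le> 2 * d_F \<sigma> \<tau>"
proof -
  have D: "\<bar>pmf (\<sigma> u) z - pmf (\<tau> u) z\<bar> \<le> d_F \<sigma> \<tau>" for u z
    by (rule pmf_diff_le_d_F)
  then have "0 \<le> d_F \<sigma> \<tau>"
    by (meson abs_ge_zero order_trans)
  consider "l s \<noteq> l t" | "l s = l t" "s = t" | "l s = l t" "s \<noteq> t"
    by blast
  then show ?thesis
  proof cases
    case 1
    with assms(1) show ?thesis
      using \<open>0 \<le> d_F \<sigma> \<tau>\<close>
      by (simp add: policies_def label_diff_pairs_def transport_policy_def)
  next
    case 2
    with assms have "P (s, t) = map_pmf (\<lambda>x. (x, x)) (\<sigma> s)"
      using diag_supported_eq_map_diag[of "P (s, s)"]
      by (auto simp: policies_def label_diff_pairs_def couplings_def diag_closed_def)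
    with 2 show ?thesis
      using D[of s x] \<open>0 \<le> d_F \<sigma> \<tau>\<close>
      by (auto simp: transport_policy_def pmf_map_diag)
  next
    case 3
    with assms(1) have "map_pmf fst (P (s, t)) = \<sigma> s" "map_pmf snd (P (s, t)) = \<sigma> t"
      by (auto simp: policies_def label_diff_pairs_def couplings_def)
    from transport_coupling_close[OF this, of "\<tau> s" "\<tau> t" x y] 3 show ?thesis
      using D[of s x] D[of t y] by (simp add: transport_policy_def)
  qed
qed

theorem mainTheorem13:
  fixes l :: "'s::finite \<Rightarrow> 'l"
    and \<sigma> \<tau> :: "'s \<Rightarrow> 's pmf"
    and P :: "'s \<times> 's \<Rightarrow> ('s \<times> 's) pmf"
  assumes "P \<in> policies l \<sigma>"
    and "diag_closed P"
  shows "\<exists>Q. Q \<in> policies l \<tau> \<and> diag_closed Q \<and> d_F P Q \<le> 2 * d_F \<sigma> \<tau>"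
proof (intro exI conjI)
  show "transport_policy l \<sigma> \<tau> P \<in> policies l \<tau>"
    using assms(1) by (rule transport_policy_in_policies)
  show "diag_closed (transport_policy l \<sigma> \<tau> P)"
    by (rule diag_closed_transport_policy)
  show "d_F P (transport_policy l \<sigma> \<tau> P) \<le> 2 * d_F \<sigma> \<tau>"
    using transport_policy_close[OF assms] by (intro d_F_le) (metis surj_pair)
qed

end
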